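(* Let $\Lambda$ be a $d$-partition of $\{1,\dots,N\}$ and let $r^{(n)}_N(x,z)=\mathbb P^\circ(X_N(n)=z\mid X_N(0)=x)$ denote the $n$-step transition probabilities of the associated lumped chain. (i) For all $0<n\le N$, all $x\in\mathcal S_d$ and all $z\in\Gamma_{N,d}$ with $\mathrm{dist}(x,z)=n$, $$r^{(n)}_N(x,z)=\frac{n!}{N^n}\frac{\mathbb Q_N(z)}{\mathbb Q_N(x)}.$$ (ii) Let $n\ge0$, let $m\ge1$ be such that $p=(n+2-m)/2$ is a nonnegative integer. Then for all $x\in\mathcal S_d$ and all $z\in\Gamma_{N,d}$ with $\mathrm{dist}(x,z)=m$, $$r^{(n+2)}_N(x,z)\le r^{(m)}_N(x,z)\frac1{N^p}\frac{(m+2p)!}{m!\,p!}.$$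
   Context: Let $(\sigma_N(t))$ be the discrete-time simple random walk on $\{-1,1\}^N$ (jump to each Hamming neighbour with probability $1/N$). For a partition $\Lambda$ of $\{1,\dots,N\}$ into nonempty classes $\Lambda_1,\dots,\Lambda_d$, let $\gamma_k(\sigma)=|\Lambda_k|^{-1}\sum_{i\in\Lambda_k}\sigma_i$, $\gamma=(\gamma_1,\dots,\gamma_d)$, $\Gamma_{N,d}=\gamma(\{-1,1\}^N)$, $\mathcal S_d=\{-1,1\}^d$. The lumped chain $X_N(t)=\gamma(\sigma_N(t))$ is a Markov chain on $\Gamma_{N,d}$ with transition probabilities $r_N(x,x+s\frac2{|\Lambda_k|}u_k)=\frac{|\Lambda_k|}N\frac{1-sx_k}2$ ($s=\pm1$, $u_k$ canonical basis) and reversible measure $\mathbb Q_N(x)=2^{-N}\prod_k\binom{|\Lambda_k|}{|\Lambda_k|(1+x_k)/2}$. $\mathrm{dist}(x,y)=\sum_k\frac{|\Lambda_k|}2|x_k-y_k|$. *)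

theory Defs
  imports Complex_Main
begin

definition is_partition :: "nat \<Rightarrow> nat \<Rightarrow> (nat \<Rightarrow> nat set) \<Rightarrow> bool" where
  "is_partition N d Lam \<longleftrightarrow>
     (\<forall>k<d. Lam k \<noteq> {} \<and> Lam k \<subseteq> {1..N}) \<and>
     (\<forall>k<d. \<forall>l<d. k \<noteq> l \<longrightarrow> Lam k \<inter> Lam l = {}) \<and>
     (\<Union>k<d. Lam k) = {1..N}"

definition spins :: "nat \<Rightarrow> (nat \<Rightarrow> real) set" where
  "spins N = {\<sigma>. \<forall>i. (i \<in> {1..N} \<longrightarrow> \<sigma> i \<in> {-1, 1}) \<and> (i \<notin> {1..N} \<longrightarrow> \<sigma> i = 0)}"

text \<open>Block magnetisation gamma; vectors in R^d are functions vanishing at indices \<ge> d.\<close>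
definition gamma :: "nat \<Rightarrow> (nat \<Rightarrow> nat set) \<Rightarrow> (nat \<Rightarrow> real) \<Rightarrow> (nat \<Rightarrow> real)" where
  "gamma d Lam \<sigma> = (\<lambda>k. if k < d then (\<Sum>i\<in>Lam k. \<sigma> i) / real (card (Lam k)) else 0)"

definition Gamma :: "nat \<Rightarrow> nat \<Rightarrow> (nat \<Rightarrow> nat set) \<Rightarrow> (nat \<Rightarrow> real) set" where
  "Gamma N d Lam = gamma d Lam ` spins N"

definition Sd :: "nat \<Rightarrow> (nat \<Rightarrow> real) set" where
  "Sd d = {x. \<forall>k. (k < d \<longrightarrow> x k \<in> {-1, 1}) \<and> (d \<le> k \<longrightarrow> x k = 0)}"

definition rN :: "nat \<Rightarrow> nat \<Rightarrow> (nat \<Rightarrow> nat set) \<Rightarrow> (nat \<Rightarrow> real) \<Rightarrow> (nat \<Rightarrow> real) \<Rightarrow> real" where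
  "rN N d Lam x y = (\<Sum>k<d. \<Sum>s\<in>{-1, 1::real}.
      if y = x(k := x k + s * 2 / real (card (Lam k)))
      then real (card (Lam k)) / real N * (1 - s * x k) / 2 else 0)"

fun rn :: "nat \<Rightarrow> nat \<Rightarrow> (nat \<Rightarrow> nat set) \<Rightarrow> nat \<Rightarrow> (nat \<Rightarrow> real) \<Rightarrow> (nat \<Rightarrow> real) \<Rightarrow> real" where
  "rn N d Lam 0 x z = (if x = z then 1 else 0)"
| "rn N d Lam (Suc n) x z = (\<Sum>y\<in>Gamma N d Lam. rN N d Lam x y * rn N d Lam n y z)"

text \<open>Reversible measure Q_N(x) = 2^-N prod_k binom(|Lam_k|, |Lam_k|(1+x_k)/2)
  (the lower index is an integer on Gamma).\<close>
definition QN :: "nat \<Rightarrow> nat \<Rightarrow> (nat \<Rightarrow> nat set) \<Rightarrow> (nat \<Rightarrow> real) \<Rightarrow> real" where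
  "QN N d Lam x = (1 / 2 ^ N) *
     (\<Prod>k<d. real (card (Lam k) choose nat (round (real (card (Lam k)) * (1 + x k) / 2))))"

definition distL :: "nat \<Rightarrow> (nat \<Rightarrow> nat set) \<Rightarrow> (nat \<Rightarrow> real) \<Rightarrow> (nat \<Rightarrow> real) \<Rightarrow> real" where
  "distL d Lam x y = (\<Sum>k<d. real (card (Lam k)) / 2 * \<bar>x k - y k\<bar>)"

end

theory Submission
  imports Defs
begin

text \<open>Fix the corner \<open>x\<close> and, for \<open>z \<in> \<Gamma>\<close>, let \<open>D\<^sub>k(z)\<close> be the number of spins in
  block \<open>k\<close> disagreeing with \<open>x\<close>. Then \<open>dist(x,z) = \<Sum>\<^sub>k D\<^sub>k(z)\<close> and
  \<open>Q(z)/Q(x) = \<Prod>\<^sub>k binom(|\<Lambda>\<^sub>k|, D\<^sub>k(z))\<close>. Decomposing on the last step,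
  \<open>N r^(L+1)(x,z)\<close> is the sum over \<open>k\<close> of \<open>(|\<Lambda>\<^sub>k| - D\<^sub>k + 1) r^(L)(x,z')\<close>, for the
  neighbour \<open>z'\<close> one step closer to \<open>x\<close> in block \<open>k\<close>, and of \<open>(D\<^sub>k + 1) r^(L)(x,z'')\<close>,
  for the neighbour \<open>z''\<close> one step farther. Every step changes the distance by one, so
  \<open>r^(L)(x,z) = 0\<close> unless \<open>L = dist(x,z) + 2p\<close>. Using
  \<open>binom(c,a) (c - a) = binom(c,a+1) (a + 1)\<close>, induction on \<open>L\<close> gives the exact value
  \<open>L! Q(z) / (N^L Q(x))\<close> when \<open>p = 0\<close> and the bound \<open>L! Q(z) / (p! N^(m+p) Q(x))\<close>,
  \<open>m = dist(x,z)\<close>, in general; dividing the two yields (ii).\<close>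

locale lumped_chain =
  fixes N d :: nat and Lam :: "nat \<Rightarrow> nat set"
  assumes partition: "is_partition N d Lam" and d_pos: "0 < d"
begin

abbreviation \<Gamma> :: "(nat \<Rightarrow> real) set" where "\<Gamma> \<equiv> Gamma N d Lam"
abbreviation bsize :: "nat \<Rightarrow> nat" where "bsize k \<equiv> card (Lam k)"

lemma block_subset: "k < d \<Longrightarrow> Lam k \<subseteq> {1..N}"
  using partition unfolding is_partition_def by auto

lemma blocks_disjoint: "k < d \<Longrightarrow> l < d \<Longrightarrow> k \<noteq> l \<Longrightarrow> Lam k \<inter> Lam l = {}"
  using partition unfolding is_partition_def by auto

lemma blocks_cover: "(\<Union>k<d. Lam k) = {1..N}"
  using partition unfolding is_partition_def by auto

lemma finite_block: "k < d \<Longrightarrow> finite (Lam k)"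
  using block_subset finite_subset by blast

lemma bsize_pos: "k < d \<Longrightarrow> 0 < bsize k"
  using partition finite_block unfolding is_partition_def by (simp add: card_gt_0_iff)

lemma sum_bsize: "(\<Sum>k<d. bsize k) = N"
proof -
  have "card (\<Union>k<d. Lam k) = (\<Sum>k<d. bsize k)"
    by (rule card_UN_disjoint) (auto simp: finite_block blocks_disjoint)
  then show ?thesis using blocks_cover by simp
qed

lemma N_pos: "0 < N"
  using member_le_sum[of 0 "{..<d}" bsize] sum_bsize bsize_pos[OF d_pos] d_pos by simp

lemma finite_Gamma: "finite \<Gamma>"
  unfolding Gamma_def spins_def by (intro finite_imageI finite_set_of_finite_funs) auto

lemma Gamma_beyond_d: "z \<in> \<Gamma> \<Longrightarrow> d \<le> k \<Longrightarrow> z k = 0"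
  unfolding Gamma_def gamma_def by auto

lemma Gamma_block_count:
  assumes "z \<in> \<Gamma>" "k < d"
  obtains a where "a \<le> bsize k" "real (bsize k) * (1 + z k) / 2 = real a"
proof -
  obtain \<sigma> where \<sigma>: "\<sigma> \<in> spins N" and z: "z = gamma d Lam \<sigma>"
    using assms(1) unfolding Gamma_def by auto
  define A where "A = {i \<in> Lam k. \<sigma> i = 1}"
  have spin: "\<sigma> i = (if i \<in> A then 1 else -1)" if "i \<in> Lam k" for i
    using that \<sigma> block_subset[OF assms(2)] unfolding spins_def A_def by force
  have "(\<Sum>i\<in>Lam k. \<sigma> i) = (\<Sum>i\<in>Lam k. (if i \<in> A then 2 else 0) - 1)"
    by (intro sum.cong) (auto simp: spin)
  also have "\<dots> = 2 * real (card A) - real (bsize k)"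
    using finite_block[OF assms(2)]
    by (simp add: sum_subtractf sum.If_cases A_def Int_absorb1 Int_def)
  finally have "real (bsize k) * (1 + z k) / 2 = real (card A)"
    using bsize_pos[OF assms(2)] z assms(2) unfolding gamma_def by (simp add: field_simps)
  moreover have "card A \<le> bsize k"
    unfolding A_def using finite_block[OF assms(2)] by (intro card_mono) auto
  ultimately show ?thesis using that by blast
qed

text \<open>Flipping a spin of sign \<open>-s\<close> in block \<open>k\<close>, which exists unless \<open>z k = s\<close>.\<close>
lemma Gamma_flip:
  assumes "z \<in> \<Gamma>" "k < d" "s \<in> {-1, 1}" "s * z k \<noteq> 1"
  shows "z(k := z k + s * 2 / real (bsize k)) \<in> \<Gamma>"
proof -
  obtain \<sigma> where \<sigma>: "\<sigma> \<in> spins N" and z: "z = gamma d Lam \<sigma>"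
    using assms(1) unfolding Gamma_def by auto
  have c_pos: "real (bsize k) > 0" using bsize_pos[OF assms(2)] by simp
  have zk: "z k = (\<Sum>i\<in>Lam k. \<sigma> i) / real (bsize k)"
    using z assms(2) unfolding gamma_def by simp
  obtain i where i: "i \<in> Lam k" "\<sigma> i \<noteq> s"
  proof (rule ccontr)
    assume "\<not> thesis"
    then have "(\<Sum>i\<in>Lam k. \<sigma> i) = (\<Sum>i\<in>Lam k. s)"
      using that by (intro sum.cong) auto
    then have "z k = s" using zk c_pos by simp
    then show False using assms(3,4) by auto
  qed
  have iN: "i \<in> {1..N}" using i block_subset[OF assms(2)] by auto
  have \<sigma>i: "\<sigma> i = - s" using i(2) \<sigma> iN assms(3) unfolding spins_def by auto
  have flip: "\<sigma>(i := s) \<in> spins N" using \<sigma> iN assms(3) unfolding spins_def by auto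
  have "gamma d Lam (\<sigma>(i := s)) j = (z(k := z k + s * 2 / real (bsize k))) j" for j
  proof -
    consider "j = k" | "j < d" "j \<noteq> k" | "d \<le> j" using assms(2) by linarith
    then show ?thesis
    proof cases
      case 1
      have "(\<Sum>l\<in>Lam k. (\<sigma>(i := s)) l) = (\<Sum>l\<in>Lam k. \<sigma> l) + 2 * s"
        using sum.remove[OF finite_block[OF assms(2)] i(1), of "\<sigma>(i := s)"]
          sum.remove[OF finite_block[OF assms(2)] i(1), of \<sigma>] \<sigma>i
        by (simp add: sum.cong[of "Lam k - {i}" _ "\<sigma>(i := s)" \<sigma>])
      then show ?thesis using 1 assms(2) zk unfolding gamma_def by (simp add: add_divide_distrib)
    next
      case 2
      then have "i \<notin> Lam j" using blocks_disjoint[of j k] assms(2) i(1) by auto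
      then show ?thesis using 2 z unfolding gamma_def by (auto intro: sum.cong)
    next
      case 3
      then show ?thesis using assms(2) z unfolding gamma_def by simp
    qed
  qed
  then have "gamma d Lam (\<sigma>(i := s)) = z(k := z k + s * 2 / real (bsize k))"
    by (rule ext)
  then show ?thesis using flip unfolding Gamma_def by (metis rev_image_eqI)
qed

lemma Sd_subset_Gamma: "Sd d \<subseteq> \<Gamma>"
proof
  fix x assume x: "x \<in> Sd d"
  define block where "block i = (THE k. k < d \<and> i \<in> Lam k)" for i
  have block: "block i = k" if "k < d" "i \<in> Lam k" for i k
    unfolding block_def using that blocks_disjoint by (intro the_equality) auto
  define \<sigma> where "\<sigma> i = (if i \<in> {1..N} then x (block i) else 0)" for i
  have "\<sigma> i \<in> {-1, 1}" if i: "i \<in> {1..N}" for i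
  proof -
    obtain k where k: "k < d" "i \<in> Lam k"
      using i blocks_cover by blast
    then have "\<sigma> i = x k" using i block unfolding \<sigma>_def by simp
    then show ?thesis using k(1) x unfolding Sd_def by simp
  qed
  then have "\<sigma> \<in> spins N" unfolding spins_def by (simp add: \<sigma>_def)
  moreover have "gamma d Lam \<sigma> = x"
  proof
    fix k
    show "gamma d Lam \<sigma> k = x k"
    proof (cases "k < d")
      case True
      have "(\<Sum>i\<in>Lam k. \<sigma> i) = (\<Sum>i\<in>Lam k. x k)"
        using block[OF True] block_subset[OF True] unfolding \<sigma>_def by (intro sum.cong) auto
      then show ?thesis using True bsize_pos[OF True] unfolding gamma_def by simp
    next
      case False
      then show ?thesis using x unfolding gamma_def Sd_def by simp
    qed
  qed
  ultimately show "x \<in> \<Gamma>" unfolding Gamma_def by (metis rev_image_eqI)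
qed

lemma rn_outside_Gamma: "y \<in> \<Gamma> \<Longrightarrow> z \<notin> \<Gamma> \<Longrightarrow> rn N d Lam n y z = 0"
  by (induction n arbitrary: y) auto

lemma rn_Suc_last:
  assumes "x \<in> \<Gamma>" "z \<in> \<Gamma>"
  shows "rn N d Lam (Suc L) x z = (\<Sum>y\<in>\<Gamma>. rn N d Lam L x y * rN N d Lam y z)"
  using assms(1)
proof (induction L arbitrary: x)
  case 0
  have "(\<Sum>y\<in>\<Gamma>. (if x = y then 1 else 0) * rN N d Lam y z)
      = (\<Sum>y\<in>\<Gamma>. if x = y then rN N d Lam y z else 0)"
    "(\<Sum>y\<in>\<Gamma>. rN N d Lam x y * (if y = z then 1 else 0))
      = (\<Sum>y\<in>\<Gamma>. if y = z then rN N d Lam x y else 0)"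
    by (auto intro: sum.cong)
  then show ?case using 0 assms(2) finite_Gamma by simp
next
  case (Suc L)
  have "rn N d Lam (Suc (Suc L)) x z
      = (\<Sum>y\<in>\<Gamma>. rN N d Lam x y * (\<Sum>w\<in>\<Gamma>. rn N d Lam L y w * rN N d Lam w z))"
    using Suc.IH by (simp del: rn.simps(2) add: rn.simps(2)[of _ _ _ "Suc L"])
  also have "\<dots> = (\<Sum>y\<in>\<Gamma>. \<Sum>w\<in>\<Gamma>. rN N d Lam x y * rn N d Lam L y w * rN N d Lam w z)"
    by (simp add: sum_distrib_left mult.assoc)
  also have "\<dots> = (\<Sum>w\<in>\<Gamma>. \<Sum>y\<in>\<Gamma>. rN N d Lam x y * rn N d Lam L y w * rN N d Lam w z)"
    by (rule sum.swap)
  also have "\<dots> = (\<Sum>w\<in>\<Gamma>. rn N d Lam (Suc L) x w * rN N d Lam w z)"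
    by (simp add: sum_distrib_right)
  finally show ?case .
qed

lemma sum_rN_last_step:
  assumes "\<And>y. y \<notin> \<Gamma> \<Longrightarrow> g y = 0"
  shows "(\<Sum>y\<in>\<Gamma>. g y * rN N d Lam y z)
    = (\<Sum>k<d. \<Sum>s\<in>{-1, 1}. g (z(k := z k - s * 2 / real (bsize k)))
         * ((real (bsize k) * (1 - s * z k) / 2 + 1) / real N))"
proof -
  have step: "(z = y(k := y k + t)) \<longleftrightarrow> (y = z(k := z k - t))" for y k and t :: real
    by (auto simp: fun_eq_iff)
  have "(\<Sum>y\<in>\<Gamma>. g y * rN N d Lam y z)
      = (\<Sum>y\<in>\<Gamma>. \<Sum>k<d. \<Sum>s\<in>{-1, 1}. if y = z(k := z k - s * 2 / real (bsize k))
          then g y * (real (bsize k) / real N * (1 - s * y k) / 2) else 0)"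
    unfolding rN_def sum_distrib_left by (intro sum.cong refl) (simp add: step)
  also have "\<dots> = (\<Sum>k<d. \<Sum>s\<in>{-1, 1}. \<Sum>y\<in>\<Gamma>. if y = z(k := z k - s * 2 / real (bsize k))
          then g y * (real (bsize k) / real N * (1 - s * y k) / 2) else 0)"
    by (subst sum.swap) (simp add: sum.swap[of _ \<Gamma>])
  also have "\<dots> = (\<Sum>k<d. \<Sum>s\<in>{-1, 1}. g (z(k := z k - s * 2 / real (bsize k)))
         * ((real (bsize k) * (1 - s * z k) / 2 + 1) / real N))"
  proof (intro sum.cong refl)
    fix k s assume k: "k \<in> {..<d}" and s: "s \<in> {-1, 1 :: real}"
    let ?y = "z(k := z k - s * 2 / real (bsize k))"
    have "real (bsize k) / real N * (1 - s * ?y k) / 2 = (real (bsize k) * (1 - s * z k) / 2 + 1) / real N"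
      using s bsize_pos[of k] k N_pos by (auto simp: field_simps)
    then show "(\<Sum>y\<in>\<Gamma>. if y = ?y then g y * (real (bsize k) / real N * (1 - s * y k) / 2) else 0)
        = g ?y * ((real (bsize k) * (1 - s * z k) / 2 + 1) / real N)"
      using assms[of ?y] finite_Gamma by (simp add: sum.delta')
  qed
  finally show ?thesis .
qed

end

locale lumped_chain_corner = lumped_chain +
  fixes x :: "nat \<Rightarrow> real"
  assumes corner: "x \<in> Sd d"
begin

text \<open>On \<open>\<Gamma>\<close> the rounded quantity is already the natural number \<open>D\<^sub>k(z)\<close> of spins in
  block \<open>k\<close> that disagree with the corner \<open>x\<close>.\<close>
definition mismatch :: "(nat \<Rightarrow> real) \<Rightarrow> nat \<Rightarrow> nat" where
  "mismatch z k = nat (round (real (bsize k) * (1 - x k * z k) / 2))"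

definition total_mismatch :: "(nat \<Rightarrow> real) \<Rightarrow> nat" where
  "total_mismatch z = (\<Sum>k<d. mismatch z k)"

definition weight :: "(nat \<Rightarrow> real) \<Rightarrow> nat" where
  "weight z = (\<Prod>k<d. bsize k choose mismatch z k)"

definition toward :: "(nat \<Rightarrow> real) \<Rightarrow> nat \<Rightarrow> nat \<Rightarrow> real" where
  "toward z k = z(k := z k + x k * 2 / real (bsize k))"

definition away :: "(nat \<Rightarrow> real) \<Rightarrow> nat \<Rightarrow> nat \<Rightarrow> real" where
  "away z k = z(k := z k - x k * 2 / real (bsize k))"

lemma corner_sign: "k < d \<Longrightarrow> x k = 1 \<or> x k = -1"
  using corner unfolding Sd_def by auto

lemma corner_in_Gamma: "x \<in> \<Gamma>"
  using corner Sd_subset_Gamma by blast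

lemma mismatch_Gamma:
  assumes "z \<in> \<Gamma>" "k < d"
  shows "real (mismatch z k) = real (bsize k) * (1 - x k * z k) / 2 \<and> mismatch z k \<le> bsize k"
proof -
  obtain a where a: "a \<le> bsize k" "real (bsize k) * (1 + z k) / 2 = real a"
    using Gamma_block_count[OF assms] .
  then have "real (bsize k) * (1 - x k * z k) / 2 = real (if x k = 1 then bsize k - a else a)"
    using corner_sign[OF assms(2)] by (auto simp: of_nat_diff field_simps)
  then show ?thesis unfolding mismatch_def using a(1) by auto
qed

lemmas real_mismatch = mismatch_Gamma[THEN conjunct1]
  and mismatch_le_bsize = mismatch_Gamma[THEN conjunct2]

lemma mismatch_corner: "k < d \<Longrightarrow> mismatch x k = 0"
  using corner_sign[of k] unfolding mismatch_def by auto

lemma total_mismatch_corner: "total_mismatch x = 0"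
  unfolding total_mismatch_def by (simp add: mismatch_corner)

lemma weight_corner: "weight x = 1"
  unfolding weight_def by (simp add: mismatch_corner)

lemma total_mismatch_eq_0_imp_corner:
  assumes "z \<in> \<Gamma>" "total_mismatch z = 0"
  shows "z = x"
proof
  fix k
  show "z k = x k"
  proof (cases "k < d")
    case True
    then have "mismatch z k = 0" using assms(2) unfolding total_mismatch_def by simp
    then have "x k * z k = 1" using real_mismatch[OF assms(1) True] bsize_pos[OF True] by simp
    then show ?thesis using corner_sign[OF True] by auto
  next
    case False
    then show ?thesis using Gamma_beyond_d[OF assms(1)] corner unfolding Sd_def by simp
  qed
qed

lemma mismatch_away_other [simp]: "j \<noteq> k \<Longrightarrow> mismatch (away z k) j = mismatch z j"
  unfolding mismatch_def away_def by simp

lemma away_toward [simp]: "away (toward z k) k = z"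
  unfolding away_def toward_def by simp

lemma toward_in_Gamma:
  assumes "z \<in> \<Gamma>" "k < d" "mismatch z k \<noteq> 0"
  shows "toward z k \<in> \<Gamma>"
proof -
  have "x k * z k \<noteq> 1" using assms real_mismatch[OF assms(1,2)] by auto
  then show ?thesis
    using Gamma_flip[OF assms(1,2), of "x k"] corner_sign[OF assms(2)] unfolding toward_def by auto
qed

context
  fixes z k
  assumes z: "z \<in> \<Gamma>" and away: "away z k \<in> \<Gamma>" and k: "k < d"
begin

lemma mismatch_away: "mismatch (away z k) k = Suc (mismatch z k)"
proof -
  have "x k * away z k k = x k * z k - 2 / real (bsize k)"
    using corner_sign[OF k] by (auto simp: away_def algebra_simps)
  then have "real (mismatch (away z k) k) = real (mismatch z k) + 1"
    using real_mismatch[OF away k] real_mismatch[OF z k] bsize_pos[OF k]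
    by (simp add: field_simps)
  then show ?thesis by simp
qed

lemma total_mismatch_away: "total_mismatch (away z k) = Suc (total_mismatch z)"
proof -
  have "(\<Sum>j\<in>{..<d} - {k}. mismatch (away z k) j) = (\<Sum>j\<in>{..<d} - {k}. mismatch z j)"
    by (intro sum.cong) auto
  then show ?thesis
    unfolding total_mismatch_def using k mismatch_away by (simp add: sum.remove[of "{..<d}" k])
qed

lemma weight_away: "weight (away z k) * Suc (mismatch z k) = weight z * (bsize k - mismatch z k)"
proof -
  let ?m = "mismatch z k" and ?P = "\<Prod>j\<in>{..<d} - {k}. bsize j choose mismatch z j"
  have "(\<Prod>j\<in>{..<d} - {k}. bsize j choose mismatch (away z k) j) = ?P"
    by (intro prod.cong) auto
  then have weights: "weight (away z k) = (bsize k choose Suc ?m) * ?P"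
    "weight z = (bsize k choose ?m) * ?P"
    unfolding weight_def using k mismatch_away by (simp_all add: prod.remove[of "{..<d}" k])
  have binomial: "(bsize k choose Suc ?m) * Suc ?m = (bsize k choose ?m) * (bsize k - ?m)"
    using binomial_absorb_comp[of "bsize k" ?m] binomial_absorption[of ?m "bsize k"]
    by (simp add: mult.commute)
  have "weight (away z k) * Suc ?m = ((bsize k choose Suc ?m) * Suc ?m) * ?P"
    unfolding weights by (simp only: mult_ac)
  also have "\<dots> = weight z * (bsize k - ?m)"
    unfolding binomial weights by (simp only: mult_ac)
  finally show ?thesis .
qed

end

context
  fixes z k
  assumes z: "z \<in> \<Gamma>" and toward: "toward z k \<in> \<Gamma>" and k: "k < d"
begin

lemma mismatch_toward: "Suc (mismatch (toward z k) k) = mismatch z k"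
  using mismatch_away[OF toward _ k] z by simp

lemma total_mismatch_toward: "Suc (total_mismatch (toward z k)) = total_mismatch z"
  using total_mismatch_away[OF toward _ k] z by simp

lemma weight_toward:
  "weight (toward z k) * (bsize k - mismatch z k + 1) = weight z * mismatch z k"
proof -
  have "bsize k - mismatch (toward z k) k = bsize k - mismatch z k + 1"
    using mismatch_toward mismatch_le_bsize[OF z k] by linarith
  then show ?thesis
    using weight_away[OF toward _ k] z mismatch_toward by (simp add: mult.commute)
qed

end

lemma distL_corner: "z \<in> \<Gamma> \<Longrightarrow> distL d Lam x z = real (total_mismatch z)"
  unfolding distL_def total_mismatch_def of_nat_sum
proof (intro sum.cong refl)
  fix z k assume z: "z \<in> \<Gamma>" and "k \<in> {..<d}"
  then have k: "k < d" by simp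
  have "0 \<le> real (bsize k) * (1 - x k * z k)"
    using real_mismatch[OF z k] by simp
  then have "0 \<le> 1 - x k * z k"
    using bsize_pos[OF k] by (simp add: zero_le_mult_iff)
  moreover have "\<bar>x k - z k\<bar> = \<bar>1 - x k * z k\<bar>"
    using corner_sign[OF k] by (auto simp: abs_minus_commute)
  ultimately show "real (bsize k) / 2 * \<bar>x k - z k\<bar> = real (mismatch z k)"
    using real_mismatch[OF z k] by simp
qed

lemma QN_eq_weight: "z \<in> \<Gamma> \<Longrightarrow> QN N d Lam z = real (weight z) / 2 ^ N"
  unfolding QN_def weight_def of_nat_prod
proof (simp, intro prod.cong refl)
  fix z k assume z: "z \<in> \<Gamma>" and "k \<in> {..<d}"
  then have k: "k < d" by simp
  obtain a where a: "a \<le> bsize k" "real (bsize k) * (1 + z k) / 2 = real a"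
    using Gamma_block_count[OF z k] .
  have "real (mismatch z k) = real (if x k = 1 then bsize k - a else a)"
    using a corner_sign[OF k] real_mismatch[OF z k] by (auto simp: of_nat_diff field_simps)
  then have "bsize k choose a = bsize k choose mismatch z k"
    using binomial_symmetric[OF a(1)] by (auto split: if_splits)
  then show "real (bsize k choose nat (round (real (bsize k) * (1 + z k) / 2)))
      = real (bsize k choose mismatch z k)"
    unfolding a(2) by simp
qed

lemma QN_ratio: "z \<in> \<Gamma> \<Longrightarrow> QN N d Lam z / QN N d Lam x = real (weight z)"
  using QN_eq_weight[of z] QN_eq_weight[OF corner_in_Gamma] weight_corner by simp

lemma rn_Suc_corner:
  assumes z: "z \<in> \<Gamma>"
  shows "rn N d Lam (Suc L) x z
    = (\<Sum>k<d. rn N d Lam L x (toward z k) * real (bsize k - mismatch z k + 1)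
              + rn N d Lam L x (away z k) * real (Suc (mismatch z k))) / real N"
proof -
  have "rn N d Lam (Suc L) x z = (\<Sum>y\<in>\<Gamma>. rn N d Lam L x y * rN N d Lam y z)"
    using rn_Suc_last[OF corner_in_Gamma z] .
  also have "\<dots> = (\<Sum>k<d. \<Sum>s\<in>{-1, 1}. rn N d Lam L x (z(k := z k - s * 2 / real (bsize k)))
         * ((real (bsize k) * (1 - s * z k) / 2 + 1) / real N))"
    using sum_rN_last_step rn_outside_Gamma[OF corner_in_Gamma] by blast
  also have "\<dots> = (\<Sum>k<d. (rn N d Lam L x (toward z k) * real (bsize k - mismatch z k + 1)
              + rn N d Lam L x (away z k) * real (Suc (mismatch z k))) / real N)"
  proof (intro sum.cong refl)
    fix k assume "k \<in> {..<d}"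
    then have k: "k < d" by simp
    let ?f = "\<lambda>s. rn N d Lam L x (z(k := z k - s * 2 / real (bsize k)))
         * ((real (bsize k) * (1 - s * z k) / 2 + 1) / real N)"
    have "(\<Sum>s\<in>{-1, 1}. ?f s) = ?f (- x k) + ?f (x k)"
      using corner_sign[OF k] by auto
    moreover have "real (bsize k) * (1 + x k * z k) / 2 + 1 = real (bsize k - mismatch z k + 1)"
      using real_mismatch[OF z k] mismatch_le_bsize[OF z k] by (simp add: of_nat_diff field_simps)
    then have "?f (- x k) = rn N d Lam L x (toward z k) * real (bsize k - mismatch z k + 1) / real N"
      by (simp add: toward_def)
    moreover have "?f (x k) = rn N d Lam L x (away z k) * real (Suc (mismatch z k)) / real N"
      using real_mismatch[OF z k] by (simp add: away_def)
    ultimately show "(\<Sum>s\<in>{-1, 1}. ?f s)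
      = (rn N d Lam L x (toward z k) * real (bsize k - mismatch z k + 1)
              + rn N d Lam L x (away z k) * real (Suc (mismatch z k))) / real N"
      by (simp add: add_divide_distrib)
  qed
  finally show ?thesis by (simp add: sum_divide_distrib)
qed

lemma rn_corner_parity:
  assumes "z \<in> \<Gamma>" "rn N d Lam L x z \<noteq> 0"
  shows "\<exists>p. L = total_mismatch z + 2 * p"
  using assms
proof (induction L arbitrary: z)
  case 0
  then show ?case using total_mismatch_corner by (simp split: if_splits)
next
  case (Suc L)
  let ?term = "\<lambda>k. rn N d Lam L x (toward z k) * real (bsize k - mismatch z k + 1)
              + rn N d Lam L x (away z k) * real (Suc (mismatch z k))"
  have "sum ?term {..<d} \<noteq> 0"
    using Suc.prems rn_Suc_corner[OF Suc.prems(1), of L] by auto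
  then obtain k where k: "k < d" and "?term k \<noteq> 0"
    by (meson lessThan_iff sum.neutral)
  then consider (toward) "rn N d Lam L x (toward z k) \<noteq> 0" | (away) "rn N d Lam L x (away z k) \<noteq> 0"
    by force
  then show ?case
  proof cases
    case toward
    then have t: "toward z k \<in> \<Gamma>" using rn_outside_Gamma[OF corner_in_Gamma] by blast
    obtain p where "L = total_mismatch (toward z k) + 2 * p" using Suc.IH[OF t toward] by blast
    then show ?thesis using total_mismatch_toward[OF Suc.prems(1) t k] by (intro exI[of _ p]) auto
  next
    case away
    then have a: "away z k \<in> \<Gamma>" using rn_outside_Gamma[OF corner_in_Gamma] by blast
    obtain p where "L = total_mismatch (away z k) + 2 * p" using Suc.IH[OF a away] by blast
    then show ?thesis using total_mismatch_away[OF Suc.prems(1) a k] by (intro exI[of _ "Suc p"]) auto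
  qed
qed

definition rn_bound :: "nat \<Rightarrow> (nat \<Rightarrow> real) \<Rightarrow> nat \<Rightarrow> real" where
  "rn_bound L z p = real (weight z) * fact L / (fact p * real N ^ (total_mismatch z + p))"

lemma rn_bound_nonneg: "0 \<le> rn_bound L z p"
  unfolding rn_bound_def by simp

lemma rn_bound_Suc: "rn_bound (Suc L) z p = real (Suc L) * rn_bound L z p"
  unfolding rn_bound_def by simp

lemma rn_bound_toward:
  assumes "z \<in> \<Gamma>" "toward z k \<in> \<Gamma>" "k < d"
  shows "rn_bound L (toward z k) p * real (bsize k - mismatch z k + 1)
    = real N * rn_bound L z p * real (mismatch z k)"
proof -
  have "real (weight (toward z k)) * real (bsize k - mismatch z k + 1)
      = real (weight z) * real (mismatch z k)"
    using weight_toward[OF assms] by (metis of_nat_mult)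
  moreover have "total_mismatch z + p = Suc (total_mismatch (toward z k) + p)"
    using total_mismatch_toward[OF assms] by simp
  ultimately show ?thesis
    unfolding rn_bound_def using N_pos by (simp add: field_simps)
qed

lemma rn_bound_away:
  assumes "z \<in> \<Gamma>" "away z k \<in> \<Gamma>" "k < d"
  shows "rn_bound L (away z k) q * real (Suc (mismatch z k))
    = real (Suc q) * rn_bound L z (Suc q) * real (bsize k - mismatch z k)"
proof -
  let ?D = "fact q * real N ^ (total_mismatch z + Suc q)"
  have "real (weight (away z k)) * real (Suc (mismatch z k))
      = real (weight z) * real (bsize k - mismatch z k)"
    using weight_away[OF assms] by (metis of_nat_mult)
  moreover have "total_mismatch (away z k) + q = total_mismatch z + Suc q"
    using total_mismatch_away[OF assms] by simp
  ultimately have "rn_bound L (away z k) q * real (Suc (mismatch z k))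
      = real (weight z) * real (bsize k - mismatch z k) * fact L / ?D"
    unfolding rn_bound_def by simp
  moreover have "real (Suc q) * rn_bound L z (Suc q) = real (weight z) * fact L / ?D"
    unfolding rn_bound_def by (simp add: fact_Suc del: of_nat_Suc)
  ultimately show ?thesis by simp
qed

lemma rn_corner_eq_rn_bound:
  assumes "z \<in> \<Gamma>" "total_mismatch z = L"
  shows "rn N d Lam L x z = rn_bound L z 0"
  using assms
proof (induction L arbitrary: z)
  case 0
  then have "z = x" using total_mismatch_eq_0_imp_corner by simp
  then show ?case using weight_corner total_mismatch_corner by (simp add: rn_bound_def)
next
  case (Suc L)
  have toward_term: "rn N d Lam L x (toward z k) * real (bsize k - mismatch z k + 1)
      = real N * rn_bound L z 0 * real (mismatch z k)" if k: "k < d" for k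
  proof (cases "toward z k \<in> \<Gamma>")
    case True
    then have "rn N d Lam L x (toward z k) = rn_bound L (toward z k) 0"
      using Suc.IH total_mismatch_toward[OF Suc.prems(1) True k] Suc.prems(2) by simp
    then show ?thesis using rn_bound_toward[OF Suc.prems(1) True k] by simp
  next
    case False
    then show ?thesis
      using toward_in_Gamma[OF Suc.prems(1) k] rn_outside_Gamma[OF corner_in_Gamma] by auto
  qed
  have away_term: "rn N d Lam L x (away z k) = 0" if k: "k < d" for k
  proof (rule ccontr)
    assume ne: "rn N d Lam L x (away z k) \<noteq> 0"
    then have a: "away z k \<in> \<Gamma>" using rn_outside_Gamma[OF corner_in_Gamma] by blast
    show False
      using rn_corner_parity[OF a ne] total_mismatch_away[OF Suc.prems(1) a k] Suc.prems(2) by auto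
  qed
  have "rn N d Lam (Suc L) x z = (\<Sum>k<d. real N * rn_bound L z 0 * real (mismatch z k)) / real N"
    unfolding rn_Suc_corner[OF Suc.prems(1)]
    by (intro arg_cong[where f = "\<lambda>s. s / real N"] sum.cong refl)
      (simp only: lessThan_iff toward_term away_term mult_zero_left add_0_right)
  also have "\<dots> = real N * rn_bound L z 0 * real (total_mismatch z) / real N"
    by (simp add: total_mismatch_def sum_distrib_left)
  also have "\<dots> = real (Suc L) * rn_bound L z 0"
    using Suc.prems(2) N_pos by simp
  finally show ?case by (simp add: rn_bound_Suc)
qed

context
  fixes L p z
  assumes IH: "\<And>y q. y \<in> \<Gamma> \<Longrightarrow> L = total_mismatch y + 2 * q \<Longrightarrow> rn N d Lam L x y \<le> rn_bound L y q"
    and z: "z \<in> \<Gamma>" and L: "Suc L = total_mismatch z + 2 * p"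
begin

lemma rn_toward_term_le:
  assumes k: "k < d"
  shows "rn N d Lam L x (toward z k) * real (bsize k - mismatch z k + 1)
    \<le> real N * rn_bound L z p * real (mismatch z k)"
proof (cases "toward z k \<in> \<Gamma>")
  case True
  have "L = total_mismatch (toward z k) + 2 * p"
    using total_mismatch_toward[OF z True k] L by simp
  then have "rn N d Lam L x (toward z k) \<le> rn_bound L (toward z k) p"
    using IH[OF True] by blast
  then have "rn N d Lam L x (toward z k) * real (bsize k - mismatch z k + 1)
      \<le> rn_bound L (toward z k) p * real (bsize k - mismatch z k + 1)"
    by (rule mult_right_mono) simp
  also have "\<dots> = real N * rn_bound L z p * real (mismatch z k)"
    by (rule rn_bound_toward[OF z True k])
  finally show ?thesis .
next
  case False
  then show ?thesis using rn_outside_Gamma[OF corner_in_Gamma] rn_bound_nonneg by simp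
qed

lemma rn_away_term_le:
  assumes k: "k < d"
  shows "rn N d Lam L x (away z k) * real (Suc (mismatch z k))
    \<le> real p * rn_bound L z p * real (bsize k)"
proof (cases "rn N d Lam L x (away z k) = 0")
  case False
  then have a: "away z k \<in> \<Gamma>" using rn_outside_Gamma[OF corner_in_Gamma] by blast
  have M: "total_mismatch (away z k) = Suc (total_mismatch z)"
    using total_mismatch_away[OF z a k] .
  obtain q where p: "p = Suc q"
    using rn_corner_parity[OF a False] M L by (cases p) auto
  then have "L = total_mismatch (away z k) + 2 * q"
    using M L by simp
  then have "rn N d Lam L x (away z k) \<le> rn_bound L (away z k) q"
    using IH[OF a] by blast
  then have "rn N d Lam L x (away z k) * real (Suc (mismatch z k))
      \<le> rn_bound L (away z k) q * real (Suc (mismatch z k))"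
    by (rule mult_right_mono) simp
  also have "\<dots> = real p * rn_bound L z p * real (bsize k - mismatch z k)"
    using rn_bound_away[OF z a k] p by simp
  also have "\<dots> \<le> real p * rn_bound L z p * real (bsize k)"
    by (intro mult_left_mono) (simp_all add: rn_bound_nonneg)
  finally show ?thesis .
qed (simp add: rn_bound_nonneg)

end

lemma rn_corner_le_rn_bound:
  assumes "z \<in> \<Gamma>" "L = total_mismatch z + 2 * p"
  shows "rn N d Lam L x z \<le> rn_bound L z p"
  using assms
proof (induction L arbitrary: z p)
  case 0
  then have "z = x" "p = 0" using total_mismatch_eq_0_imp_corner by auto
  then show ?case using weight_corner total_mismatch_corner by (simp add: rn_bound_def)
next
  case (Suc L)
  let ?K = "rn_bound L z p"
  note terms = rn_toward_term_le[OF Suc.IH Suc.prems] rn_away_term_le[OF Suc.IH Suc.prems]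
  have "rn N d Lam (Suc L) x z * real N
      = (\<Sum>k<d. rn N d Lam L x (toward z k) * real (bsize k - mismatch z k + 1)
              + rn N d Lam L x (away z k) * real (Suc (mismatch z k)))"
    using rn_Suc_corner[OF Suc.prems(1)] N_pos by simp
  also have "\<dots> \<le> (\<Sum>k<d. real N * ?K * real (mismatch z k) + real p * ?K * real (bsize k))"
    by (intro sum_mono add_mono terms) auto
  also have "\<dots> = real N * ?K * real (total_mismatch z) + real p * ?K * real N"
    using sum_bsize
    by (simp add: sum.distrib total_mismatch_def flip: sum_distrib_left of_nat_sum)
  also have "\<dots> = real N * ?K * real (total_mismatch z + p)"
    by (simp add: algebra_simps)
  also have "\<dots> \<le> real N * ?K * real (Suc L)"
    using Suc.prems(2) rn_bound_nonneg by (intro mult_left_mono) auto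
  finally have "rn N d Lam (Suc L) x z * real N \<le> rn_bound (Suc L) z p * real N"
    by (simp add: rn_bound_Suc mult_ac)
  then show ?case using N_pos by simp
qed

lemma rn_corner_at_distance:
  assumes "z \<in> \<Gamma>" "distL d Lam x z = real n"
  shows "rn N d Lam n x z = fact n / real N ^ n * (QN N d Lam z / QN N d Lam x)"
proof -
  have "total_mismatch z = n" using distL_corner assms by simp
  then show ?thesis
    using rn_corner_eq_rn_bound[OF assms(1)] QN_ratio[OF assms(1)] unfolding rn_bound_def by simp
qed

lemma rn_corner_beyond_distance_le:
  assumes "z \<in> \<Gamma>" "distL d Lam x z = real m"
  shows "rn N d Lam (m + 2 * p) x z
    \<le> rn N d Lam m x z * (1 / real N ^ p) * (fact (m + 2 * p) / (fact m * fact p))"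
proof -
  have M: "total_mismatch z = m" using distL_corner assms by simp
  have "rn N d Lam (m + 2 * p) x z \<le> rn_bound (m + 2 * p) z p"
    using rn_corner_le_rn_bound[OF assms(1)] M by blast
  also have "\<dots> = rn_bound m z 0 * (1 / real N ^ p) * (fact (m + 2 * p) / (fact m * fact p))"
    unfolding rn_bound_def M using N_pos by (simp add: field_simps power_add)
  also have "rn_bound m z 0 = rn N d Lam m x z"
    using rn_corner_eq_rn_bound[OF assms(1) M] by simp
  finally show ?thesis .
qed

end

theorem lemma3p13:
  fixes N d :: nat and Lam :: "nat \<Rightarrow> nat set"
  assumes part: "is_partition N d Lam"
  shows "(\<forall>n x z. 0 < n \<and> n \<le> N \<and> x \<in> Sd d \<and> z \<in> Gamma N d Lam \<and> distL d Lam x z = real n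
            \<longrightarrow> rn N d Lam n x z = fact n / real N ^ n * (QN N d Lam z / QN N d Lam x))
       \<and> (\<forall>n m p x z. 1 \<le> m \<and> n + 2 = m + 2 * p \<and> x \<in> Sd d \<and> z \<in> Gamma N d Lam
            \<and> distL d Lam x z = real m
            \<longrightarrow> rn N d Lam (n + 2) x z
                \<le> rn N d Lam m x z * (1 / real N ^ p) * (fact (m + 2 * p) / (fact m * fact p)))"
proof (cases "d = 0")
  case True
  then have "distL d Lam x z = 0" for x z unfolding distL_def by simp
  then show ?thesis by auto
next
  case False
  then have corner: "lumped_chain_corner N d Lam x" if "x \<in> Sd d" for x
    using part that by unfold_locales auto
  show ?thesis
    using lumped_chain_corner.rn_corner_at_distance[OF corner]
      lumped_chain_corner.rn_corner_beyond_distance_le[OF corner]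
    by (metis (no_types, lifting))
qed

end
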